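(* Let $1<a<b$ be coprime integers and $D,E\subseteq G$ subdiagrams. Let $N(D,U_E)=\{(i,j)\in D\times U_E: i\to j\}$, let $N_b(D,U_E)$ be the set of $(i,j)\in N(D,U_E)$ with $j$ strictly north of $i$, and $N_r(D,U_E)=N(D,U_E)\setminus N_b(D,U_E)$ (pairs with $j$ strictly south of $i$ or $j=i$). Then \[ |N_b(D,U_E)|=\#\{c\in D\cap E:\ M_D^E(c)\le a/b\},\qquad |N_r(D,U_E)|=|D\setminus E|+\#\{c\in D\cap E:\ m_E^D(c)\ge a/b\}. \]
   Context: Fix coprime integers $1<a<b$. Work in the grid $\mathbb{Z}^2$ ($+x$ east, $+y$ north). Let $g:\mathbb{Z}^2\to\mathbb{Z}$, $g(x,y)=ab-ax-by$; for a cell $c=(x,y)$ and integer $k$, $c-ka:=(x+k,y)$ and $c-kb:=(x,y+k)$. Let $G=\{(x,y)\in\mathbb{Z}_{\ge1}^2: g(x,y)>0\}$. A subdiagram is a subset $D\subseteq G$ such that whenever $(x,y)\in D$, $(x',y')\in G$, $x'\le x$, $y'\le y$, we have $(x',y')\in D$. For cells $i,j$, write $i\to j$ iff $0\le g(j)-g(i)<a$. For a subdiagram $E$, $U_E=\{(x,y)\in\mathbb{Z}^2: (x,y)\notin E,\ (x,y-1)\in E\cup(\mathbb{Z}_{\ge1}\times\mathbb{Z}_{\le0})\}$. For a subdiagram $D$ and $c\in D$, $\mathrm{arm}_D(c)=\max\{k\ge0: c-ka\in D\}$, $\mathrm{leg}_D(c)=\max\{k\ge0: c-kb\in D\}$.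 For subdiagrams $D,E$ and $c\in D\cap E$, $m_D^E(c)=\frac{\mathrm{leg}_E(c)}{\mathrm{arm}_D(c)+1}$ and $M_D^E(c)=\frac{\mathrm{leg}_E(c)+1}{\mathrm{arm}_D(c)}$ (with $M_D^E(c)=+\infty$ if $\mathrm{arm}_D(c)=0$). *)

theory Defs
  imports Complex_Main "HOL-Library.Extended_Real"
begin

type_synonym cell = "int \<times> int"

definition gfun :: "int \<Rightarrow> int \<Rightarrow> cell \<Rightarrow> int" where
  "gfun a b c = a * b - a * fst c - b * snd c"

definition Gset :: "int \<Rightarrow> int \<Rightarrow> cell set" where
  "Gset a b = {(x, y). x \<ge> 1 \<and> y \<ge> 1 \<and> gfun a b (x, y) > 0}"

definition subdiagram :: "int \<Rightarrow> int \<Rightarrow> cell set \<Rightarrow> bool" where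
  "subdiagram a b D \<longleftrightarrow> D \<subseteq> Gset a b \<and>
     (\<forall>x y x' y'. (x, y) \<in> D \<longrightarrow> (x', y') \<in> Gset a b \<longrightarrow> x' \<le> x \<longrightarrow> y' \<le> y
        \<longrightarrow> (x', y') \<in> D)"

definition arrow :: "int \<Rightarrow> int \<Rightarrow> cell \<Rightarrow> cell \<Rightarrow> bool" where
  "arrow a b i j \<longleftrightarrow> 0 \<le> gfun a b j - gfun a b i \<and> gfun a b j - gfun a b i < a"

definition Uset :: "cell set \<Rightarrow> cell set" where
  "Uset E = {(x, y). (x, y) \<notin> E \<and> y \<ge> 1 \<and>
              ((x, y - 1) \<in> E \<or> (x \<ge> 1 \<and> y - 1 \<le> 0))}"

definition arm :: "cell set \<Rightarrow> cell \<Rightarrow> nat" where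
  "arm D c = Max {k. (fst c + int k, snd c) \<in> D}"

definition leg :: "cell set \<Rightarrow> cell \<Rightarrow> nat" where
  "leg D c = Max {k. (fst c, snd c + int k) \<in> D}"

definition small_m :: "cell set \<Rightarrow> cell set \<Rightarrow> cell \<Rightarrow> real" where
  "small_m D E c = real (leg E c) / (real (arm D c) + 1)"

definition big_M :: "cell set \<Rightarrow> cell set \<Rightarrow> cell \<Rightarrow> ereal" where
  "big_M D E c = (if arm D c = 0 then PInfty
                  else ereal ((real (leg E c) + 1) / real (arm D c)))"

definition Nset :: "int \<Rightarrow> int \<Rightarrow> cell set \<Rightarrow> cell set \<Rightarrow> (cell \<times> cell) set" where
  "Nset a b D E = {(i, j). i \<in> D \<and> j \<in> Uset E \<and> arrow a b i j}"

definition Nb :: "int \<Rightarrow> int \<Rightarrow> cell set \<Rightarrow> cell set \<Rightarrow> (cell \<times> cell) set" where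
  "Nb a b D E = {(i, j) \<in> Nset a b D E. snd j > snd i}"

definition Nr :: "int \<Rightarrow> int \<Rightarrow> cell set \<Rightarrow> cell set \<Rightarrow> (cell \<times> cell) set" where
  "Nr a b D E = Nset a b D E - Nb a b D E"

end

theory Submission
  imports Defs
begin

(*
  For the cell j = (x, h + 1) of U_E in column x (h the height of column x of E) and a cell
  i = (x\<^sub>i, y\<^sub>i) of D, the arrow i \<rightarrow> j says that g(i) - g(j) = a (x - x\<^sub>i) + b (h + 1 - y\<^sub>i)
  lies in (-a, 0]; under this condition j is north of i exactly when it is west of i.

  For a north pair, c = (x, y\<^sub>i) lies in D \<inter> E and the condition reads
  b (leg\<^sub>E c + 1) \<le> a (x\<^sub>i - x) \<le> a arm\<^sub>D c; conversely c recovers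
  x\<^sub>i = x + \<lceil>b (leg\<^sub>E c + 1) / a\<rceil>. So N_b is in bijection with the cells where M \<le> a/b.

  For the other pairs fix i. Column by column the gap g(i) - g(j) rises by at most a and it is
  eventually positive, so by telescoping the columns where it lies in (-a, 0] number [i \<notin> E]
  plus the crossing columns x, where the gap exceeds -a at x but is \<le> 0 at x + 1. Going
  \<lceil>a (x + 1 - x\<^sub>i) / b\<rceil> rows down from i at a crossing column x gives a cell c whose row
  in E ends at x, and this is a bijection onto the cells with a (arm\<^sub>E c + 1) \<le> b leg\<^sub>D c,
  i.e. where m \<ge> a/b.
*)

lemma Gset_bounds:
  assumes "(x, y) \<in> Gset a b" "0 < a" "0 < b"
  shows "1 \<le> x \<and> x < b \<and> 1 \<le> y \<and> y < a"
proof -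
  have h: "1 \<le> x" "1 \<le> y" "a * x + b * y < a * b"
    using assms(1) by (auto simp: Gset_def gfun_def)
  have "0 < a * x" "0 < b * y" using h(1,2) assms(2,3) by simp_all
  then have "a * x < a * b" "b * y < b * a" using h(3) by (simp_all add: mult.commute)
  then show ?thesis using h(1,2) assms(2,3) by (simp add: mult_less_cancel_left_pos)
qed

lemma Gset_downward_closed:
  assumes "(x, y) \<in> Gset a b" "0 < a" "0 < b" "1 \<le> x'" "x' \<le> x" "1 \<le> y'" "y' \<le> y"
  shows "(x', y') \<in> Gset a b"
proof -
  have "a * x' \<le> a * x" "b * y' \<le> b * y" using assms by simp_all
  then show ?thesis using assms(1,4,6) by (auto simp: Gset_def gfun_def)
qed

lemma finite_int_set_eq_atLeastAtMost_card:
  fixes T :: "int set"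
  assumes "finite T" "\<And>y. y \<in> T \<Longrightarrow> 1 \<le> y"
    and "\<And>y y'. y \<in> T \<Longrightarrow> 1 \<le> y' \<Longrightarrow> y' \<le> y \<Longrightarrow> y' \<in> T"
  shows "T = {1..int (card T)}"
proof (cases "T = {}")
  case False
  define M where "M = Max T"
  have M: "M \<in> T" "\<And>y. y \<in> T \<Longrightarrow> y \<le> M" using False assms(1) by (simp_all add: M_def)
  have "T = {1..M}"
  proof
    show "T \<subseteq> {1..M}" using M(2) assms(2) by auto
    show "{1..M} \<subseteq> T" using M(1) assms(3) by auto
  qed
  moreover have "1 \<le> M" using M(1) assms(2) by blast
  ultimately show ?thesis by simp
qed simp

lemma sum_int_atLeastLessThan_telescope:
  fixes f :: "int \<Rightarrow> 'a::ab_group_add"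
  assumes "u \<le> v"
  shows "(\<Sum>x\<in>{u..<v}. f x - f (x + 1)) = f u - f v"
  using assms
proof (induction v rule: int_ge_induct)
  case (step v)
  have "{u..<v + 1} = insert v {u..<v}" using step.hyps by auto
  with step show ?case by simp
qed simp

lemma window_iff_eq_div:
  fixes c t K :: int
  assumes "0 < c"
  shows "- c < c * t + K \<and> c * t + K \<le> 0 \<longleftrightarrow> t = (- K) div c"
proof
  assume "- c < c * t + K \<and> c * t + K \<le> 0"
  then show "t = (- K) div c"
    using int_div_pos_eq[of "- K" c t "- K - c * t"] by simp
next
  assume "t = (- K) div c"
  then have "- K = c * t + (- K) mod c" by simp
  moreover have "0 \<le> (- K) mod c" "(- K) mod c < c" using assms by simp_all
  ultimately show "- c < c * t + K \<and> c * t + K \<le> 0" by linarith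
qed

lemma of_int_divide_le_divide_iff:
  fixes p q r s :: int
  assumes "0 < q" "0 < s"
  shows "real_of_int p / real_of_int q \<le> real_of_int r / real_of_int s \<longleftrightarrow> p * s \<le> r * q"
proof -
  have "real_of_int p / real_of_int q \<le> real_of_int r / real_of_int s \<longleftrightarrow>
      real_of_int p * real_of_int s \<le> real_of_int r * real_of_int q"
    using assms by (simp add: divide_le_eq le_divide_eq field_simps)
  then show ?thesis by (simp flip: of_int_mult)
qed

lemma big_M_le_iff:
  assumes "0 < b"
  shows "big_M D E c \<le> ereal (real_of_int a / real_of_int b) \<longleftrightarrow>
    0 < arm D c \<and> b * (int (leg E c) + 1) \<le> a * int (arm D c)"
proof (cases "arm D c = 0")
  case False
  have "(real (leg E c) + 1) / real (arm D c) =
      real_of_int (int (leg E c) + 1) / real_of_int (int (arm D c))" by simp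
  then show ?thesis
    using False assms of_int_divide_le_divide_iff[of "int (arm D c)" b "int (leg E c) + 1" a]
    by (simp add: big_M_def mult.commute)
qed (simp add: big_M_def)

lemma small_m_ge_iff:
  assumes "0 < b"
  shows "real_of_int a / real_of_int b \<le> small_m D E c \<longleftrightarrow>
    a * (int (arm D c) + 1) \<le> b * int (leg E c)"
proof -
  have "small_m D E c = real_of_int (int (leg E c)) / real_of_int (int (arm D c) + 1)"
    by (simp add: small_m_def)
  then show ?thesis
    using assms of_int_divide_le_divide_iff[of b "int (arm D c) + 1" a "int (leg E c)"]
    by (simp add: mult.commute)
qed

section \<open>Column heights and row lengths of a subdiagram\<close>

definition col_height :: "cell set \<Rightarrow> int \<Rightarrow> int" where
  "col_height S x = int (card {y. (x, y) \<in> S})"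

definition row_length :: "cell set \<Rightarrow> int \<Rightarrow> int" where
  "row_length S y = int (card {x. (x, y) \<in> S})"

locale diagram =
  fixes a b :: int and S :: "cell set"
  assumes pos_a: "0 < a" and pos_b: "0 < b" and subdiagram_S: "subdiagram a b S"
begin

lemma bounds: "(x, y) \<in> S \<Longrightarrow> 1 \<le> x \<and> x < b \<and> 1 \<le> y \<and> y < a"
  using Gset_bounds pos_a pos_b subdiagram_S by (auto simp: subdiagram_def)

lemma downward_closed:
  assumes "(x, y) \<in> S" "1 \<le> x'" "x' \<le> x" "1 \<le> y'" "y' \<le> y"
  shows "(x', y') \<in> S"
proof -
  have "(x, y) \<in> Gset a b" using assms(1) subdiagram_S by (auto simp: subdiagram_def)
  then have "(x', y') \<in> Gset a b" using Gset_downward_closed pos_a pos_b assms by blast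
  then show ?thesis using subdiagram_S assms(1,3,5) unfolding subdiagram_def by blast
qed

lemma finite_S: "finite S"
  by (rule finite_subset[of _ "{1..b} \<times> {1..a}"]) (auto dest: bounds)

lemma mem_iff_col_height: "(x, y) \<in> S \<longleftrightarrow> 1 \<le> y \<and> y \<le> col_height S x"
proof -
  let ?C = "{y. (x, y) \<in> S}"
  have "?C \<subseteq> snd ` S" by force
  then have "finite ?C" using finite_S finite_subset by blast
  then have "?C = {1..col_height S x}"
    unfolding col_height_def
  proof (rule finite_int_set_eq_atLeastAtMost_card)
    show "1 \<le> y" if "y \<in> ?C" for y using that bounds by blast
    show "y' \<in> ?C" if "y \<in> ?C" "1 \<le> y'" "y' \<le> y" for y y'
      using that bounds downward_closed[of x y x y'] by simp
  qed
  then show ?thesis by (metis atLeastAtMost_iff mem_Collect_eq)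
qed

lemma mem_iff_row_length: "(x, y) \<in> S \<longleftrightarrow> 1 \<le> x \<and> x \<le> row_length S y"
proof -
  let ?R = "{x. (x, y) \<in> S}"
  have "?R \<subseteq> fst ` S" by force
  then have "finite ?R" using finite_S finite_subset by blast
  then have "?R = {1..row_length S y}"
    unfolding row_length_def
  proof (rule finite_int_set_eq_atLeastAtMost_card)
    show "1 \<le> x" if "x \<in> ?R" for x using that bounds by blast
    show "x' \<in> ?R" if "x \<in> ?R" "1 \<le> x'" "x' \<le> x" for x x'
      using that bounds downward_closed[of x y x' y] by simp
  qed
  then show ?thesis by (metis atLeastAtMost_iff mem_Collect_eq)
qed

lemma col_height_nonneg: "0 \<le> col_height S x"
  by (simp add: col_height_def)

lemma col_height_antimono:
  assumes "1 \<le> x" "x \<le> x'"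
  shows "col_height S x' \<le> col_height S x"
proof (cases "1 \<le> col_height S x'")
  case True
  then have "(x', col_height S x') \<in> S" by (simp add: mem_iff_col_height)
  then have "(x, col_height S x') \<in> S" using downward_closed assms True by blast
  then show ?thesis by (simp add: mem_iff_col_height)
qed (use col_height_nonneg[of x] in linarith)

lemma arm_eq:
  assumes xy: "(x, y) \<in> S"
  shows "int (arm S (x, y)) = row_length S y - x"
proof -
  have "{k. (x + int k, y) \<in> S} = {..nat (row_length S y - x)}"
    using xy bounds[OF xy] by (auto simp: mem_iff_row_length)
  moreover have "Max {..nat (row_length S y - x)} = nat (row_length S y - x)"
    by (rule Max_eqI) auto
  ultimately show ?thesis using xy by (simp add: arm_def mem_iff_row_length)
qed

lemma leg_eq:
  assumes xy: "(x, y) \<in> S"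
  shows "int (leg S (x, y)) = col_height S x - y"
proof -
  have "{k. (x, y + int k) \<in> S} = {..nat (col_height S x - y)}"
    using xy bounds[OF xy] by (auto simp: mem_iff_col_height)
  moreover have "Max {..nat (col_height S x - y)} = nat (col_height S x - y)"
    by (rule Max_eqI) auto
  ultimately show ?thesis using xy by (simp add: leg_def mem_iff_col_height)
qed

lemma Uset_iff: "(x, y) \<in> Uset S \<longleftrightarrow> 1 \<le> x \<and> y = col_height S x + 1"
proof (cases "1 \<le> x")
  case True
  then show ?thesis using col_height_nonneg[of x] by (auto simp: Uset_def mem_iff_col_height)
qed (auto simp: Uset_def dest: bounds)

end

section \<open>Arrows into U_E\<close>

locale two_diagrams = D: diagram a b D + E: diagram a b E
  for a b :: int and D E :: "cell set"
begin

(* g(i) - g(j) for the cell j of U_E in column x *)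
definition gap :: "cell \<Rightarrow> int \<Rightarrow> int" where
  "gap i x = a * (x - fst i) + b * (col_height E x + 1 - snd i)"

lemma Nset_iff:
  "((p, q), (x, y)) \<in> Nset a b D E \<longleftrightarrow>
    (p, q) \<in> D \<and> 1 \<le> x \<and> y = col_height E x + 1 \<and> - a < gap (p, q) x \<and> gap (p, q) x \<le> 0"
  by (auto simp: Nset_def arrow_def gfun_def gap_def E.Uset_iff algebra_simps)

lemma north_iff_west:
  assumes "- a < gap (p, q) x" "gap (p, q) x \<le> 0"
  shows "q \<le> col_height E x \<longleftrightarrow> x < p"
proof
  assume "q \<le> col_height E x"
  then have "0 < b * (col_height E x + 1 - q)" using E.pos_b by simp
  then have "a * (x - p) < 0" using assms(2) by (simp add: gap_def)
  then show "x < p" using D.pos_a by (simp add: mult_less_0_iff)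
next
  assume "x < p"
  then have "a * (x - p) \<le> - a" using mult_left_mono[of "x - p" "- 1" a] D.pos_a by simp
  then have "0 < b * (col_height E x + 1 - q)" using assms(1) by (simp add: gap_def)
  then show "q \<le> col_height E x" using E.pos_b by (simp add: zero_less_mult_iff)
qed

lemma Nb_iff:
  "((p, q), (x, y)) \<in> Nb a b D E \<longleftrightarrow>
    (p, q) \<in> D \<and> 1 \<le> x \<and> y = col_height E x + 1 \<and> - a < gap (p, q) x \<and> gap (p, q) x \<le> 0
    \<and> x < p"
  using north_iff_west[of p q x] by (auto simp: Nb_def Nset_iff)

lemma Nr_iff:
  "((p, q), (x, y)) \<in> Nr a b D E \<longleftrightarrow>
    (p, q) \<in> D \<and> 1 \<le> x \<and> y = col_height E x + 1 \<and> - a < gap (p, q) x \<and> gap (p, q) x \<le> 0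
    \<and> p \<le> x"
  using north_iff_west[of p q x] by (auto simp: Nr_def Nb_def Nset_iff)

lemma Nset_source_unique:
  assumes "((p, q), j) \<in> Nset a b D E" "((p', q), j) \<in> Nset a b D E"
  shows "p = p'"
proof -
  obtain x y where j: "j = (x, y)" by force
  define K where "K = b * (col_height E x + 1 - q)"
  have "gap (p, q) x = a * (x - p) + K" "gap (p', q) x = a * (x - p') + K"
    by (simp_all add: gap_def K_def)
  then have "x - p = (- K) div a" "x - p' = (- K) div a"
    using assms window_iff_eq_div[OF D.pos_a] by (auto simp: j Nset_iff)
  then show ?thesis by simp
qed

section \<open>The pairs in N_b\<close>

definition Nb_cells :: "cell set" where
  "Nb_cells = {c \<in> D \<inter> E. 0 < arm D c \<and> b * (int (leg E c) + 1) \<le> a * int (arm D c)}"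

lemma Nb_cells_if_Nb:
  assumes "((p, q), (x, y)) \<in> Nb a b D E"
  shows "(x, q) \<in> Nb_cells"
proof -
  have h: "(p, q) \<in> D" "1 \<le> x" "- a < gap (p, q) x" "gap (p, q) x \<le> 0" "x < p"
    using assms by (simp_all add: Nb_iff)
  have q: "1 \<le> q" "p \<le> row_length D q"
    using D.bounds[OF h(1)] D.mem_iff_row_length[of p q] h(1) by simp_all
  have "q \<le> col_height E x" using north_iff_west[OF h(3,4)] h(5) by simp
  then have xqE: "(x, q) \<in> E" using q(1) by (simp add: E.mem_iff_col_height)
  have xqD: "(x, q) \<in> D" using D.downward_closed[of p q x q] h q(1) by simp
  have arm: "int (arm D (x, q)) = row_length D q - x" using D.arm_eq[OF xqD] .
  have "b * (int (leg E (x, q)) + 1) = b * (col_height E x + 1 - q)"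
    using E.leg_eq[OF xqE] by simp
  also have "\<dots> = gap (p, q) x + a * (p - x)" by (simp add: gap_def algebra_simps)
  also have "\<dots> \<le> a * (p - x)" using h(4) by simp
  also have "\<dots> \<le> a * int (arm D (x, q))" using arm q(2) D.pos_a by simp
  finally show ?thesis using xqD xqE arm q(2) h(5) by (simp add: Nb_cells_def)
qed

lemma Nb_if_Nb_cells:
  assumes "(x, q) \<in> Nb_cells"
  obtains p where "((p, q), (x, col_height E x + 1)) \<in> Nb a b D E"
proof -
  have xq: "(x, q) \<in> D" "(x, q) \<in> E"
    and fit: "b * (int (leg E (x, q)) + 1) \<le> a * int (arm D (x, q))"
    using assms by (auto simp: Nb_cells_def)
  define K where "K = b * (col_height E x + 1 - q)"
  define p where "p = x - (- K) div a" \<comment> \<open>that is, x + \<lceil>K / a\<rceil>\<close>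
  have gap: "gap (p, q) x = a * (x - p) + K" by (simp add: gap_def K_def)
  have "- a < a * (x - p) + K \<and> a * (x - p) + K \<le> 0"
    using window_iff_eq_div[OF D.pos_a] by (simp add: p_def)
  then have window: "- a < gap (p, q) x" "gap (p, q) x \<le> 0" by (simp_all add: gap)
  have K: "K = b * (int (leg E (x, q)) + 1)" using E.leg_eq[OF xq(2)] by (simp add: K_def)
  then have "0 < K" using E.pos_b by simp
  then have "a * (x - p) < 0" using gap window(2) by linarith
  then have "x < p" using D.pos_a by (simp add: mult_less_0_iff)
  have "a * (p - x) < a * (int (arm D (x, q)) + 1)"
    using gap window(1) K fit by (simp add: algebra_simps)
  then have "p - x \<le> int (arm D (x, q))" using D.pos_a by (simp add: mult_less_cancel_left_pos)
  then have "(p, q) \<in> D"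
    using D.arm_eq[OF xq(1)] D.mem_iff_row_length[of x q] D.mem_iff_row_length[of p q] xq(1) \<open>x < p\<close>
    by simp
  then have "((p, q), (x, col_height E x + 1)) \<in> Nb a b D E"
    using window \<open>x < p\<close> D.bounds[OF xq(1)] by (simp add: Nb_iff)
  then show thesis by (rule that)
qed

lemma card_Nb: "card (Nb a b D E) = card {c \<in> D \<inter> E. big_M D E c \<le> ereal (real_of_int a / real_of_int b)}"
proof -
  have "{c \<in> D \<inter> E. big_M D E c \<le> ereal (real_of_int a / real_of_int b)} = Nb_cells"
    using big_M_le_iff[OF D.pos_b] by (auto simp: Nb_cells_def)
  moreover have "bij_betw (\<lambda>(i, j). (fst j, snd i)) (Nb a b D E) Nb_cells"
  proof (rule bij_betwI')
    fix X Y assume XY: "X \<in> Nb a b D E" "Y \<in> Nb a b D E"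
    obtain p q x y p' q' x' y' where X: "X = ((p, q), (x, y))" and Y: "Y = ((p', q'), (x', y'))"
      by (metis prod.collapse)
    show "(case X of (i, j) \<Rightarrow> (fst j, snd i)) = (case Y of (i, j) \<Rightarrow> (fst j, snd i))
        \<longleftrightarrow> X = Y"
    proof
      assume "(case X of (i, j) \<Rightarrow> (fst j, snd i)) = (case Y of (i, j) \<Rightarrow> (fst j, snd i))"
      then have "x' = x" "q' = q" by (simp_all add: X Y)
      moreover from this have "y' = y" using XY by (simp add: X Y Nb_iff)
      moreover from calculation have "p' = p"
        using XY Nset_source_unique[of p' q "(x, y)" p] by (simp add: X Y Nb_def)
      ultimately show "X = Y" by (simp add: X Y)
    qed simp
  next
    fix X assume "X \<in> Nb a b D E"
    moreover obtain p q x y where "X = ((p, q), (x, y))" by (metis prod.collapse)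
    ultimately show "(case X of (i, j) \<Rightarrow> (fst j, snd i)) \<in> Nb_cells"
      using Nb_cells_if_Nb by simp
  next
    fix c assume "c \<in> Nb_cells"
    moreover obtain x q where "c = (x, q)" by force
    ultimately obtain p where "((p, q), (x, col_height E x + 1)) \<in> Nb a b D E"
      using Nb_if_Nb_cells by blast
    then show "\<exists>X \<in> Nb a b D E. c = (case X of (i, j) \<Rightarrow> (fst j, snd i))"
      using \<open>c = (x, q)\<close> by force
  qed
  ultimately show ?thesis by (simp add: bij_betw_same_card)
qed

section \<open>The pairs in N_r\<close>

definition Nr_cols :: "cell \<Rightarrow> int set" where
  "Nr_cols i = {x. fst i \<le> x \<and> - a < gap i x \<and> gap i x \<le> 0}"

definition crossing_cols :: "cell \<Rightarrow> int set" where
  "crossing_cols i = {x. fst i \<le> x \<and> - a < gap i x \<and> gap i (x + 1) \<le> 0}"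

definition Nr_cells :: "cell set" where
  "Nr_cells = {c \<in> D \<inter> E. a * (int (arm E c) + 1) \<le> b * int (leg D c)}"

lemma card_Nr_eq_card_Sigma: "card (Nr a b D E) = card (Sigma D Nr_cols)"
proof -
  have "Nr a b D E = (\<lambda>(i, x). (i, (x, col_height E x + 1))) ` Sigma D Nr_cols"
  proof (intro set_eqI iffI)
    fix X assume "X \<in> Nr a b D E"
    moreover obtain p q x y where "X = ((p, q), (x, y))" by (metis prod.collapse)
    ultimately show "X \<in> (\<lambda>(i, x). (i, (x, col_height E x + 1))) ` Sigma D Nr_cols"
      by (force simp: Nr_iff Nr_cols_def)
  next
    fix X assume "X \<in> (\<lambda>(i, x). (i, (x, col_height E x + 1))) ` Sigma D Nr_cols"
    then obtain p q x where "X = ((p, q), (x, col_height E x + 1))" "(p, q) \<in> D" "x \<in> Nr_cols (p, q)"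
      by force
    then show "X \<in> Nr a b D E" using D.bounds[of p q] by (simp add: Nr_iff Nr_cols_def)
  qed
  moreover have "inj_on (\<lambda>(i, x). (i, (x, col_height E x + 1))) (Sigma D Nr_cols)"
    by (rule inj_onI) auto
  ultimately show ?thesis by (simp add: card_image)
qed

lemma gap_step: "1 \<le> x \<Longrightarrow> gap i (x + 1) \<le> gap i x + a"
  using E.col_height_antimono[of x "x + 1"] E.pos_b by (simp add: gap_def algebra_simps)

lemma gap_pos:
  assumes "i \<in> D" "fst i + b * snd i \<le> x"
  shows "0 < gap i x"
proof -
  obtain u h where i: "i = (u, h)" by force
  have "1 \<le> h" using D.bounds assms(1) i by simp
  then have "0 < b * h" using E.pos_b by simp
  then have "0 \<le> x - u" using assms(2) i by simp
  then have "x - u \<le> a * (x - u)" using mult_right_mono[of 1 a "x - u"] D.pos_a by simp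
  moreover have "b * (1 - h) \<le> b * (col_height E x + 1 - h)"
    using E.col_height_nonneg[of x] E.pos_b by simp
  ultimately show ?thesis
    using assms(2) i E.pos_b by (simp add: gap_def algebra_simps)
qed

lemma gap_start_nonpos_iff:
  assumes "i \<in> D"
  shows "gap i (fst i) \<le> 0 \<longleftrightarrow> i \<notin> E"
proof -
  obtain u h where i: "i = (u, h)" by force
  have "gap i u = b * (col_height E u + 1 - h)" by (simp add: gap_def i)
  then have "gap i u \<le> 0 \<longleftrightarrow> col_height E u + 1 \<le> h" using E.pos_b by (simp add: mult_le_0_iff)
  moreover have "1 \<le> h" using D.bounds assms i by simp
  ultimately show ?thesis by (auto simp: i E.mem_iff_col_height)
qed

lemma Nr_cols_eq:
  assumes "i \<in> D"
  shows "Nr_cols i = {fst i..<fst i + b * snd i} \<inter> {x. - a < gap i x \<and> gap i x \<le> 0}"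
proof (intro set_eqI iffI)
  fix x assume "x \<in> Nr_cols i"
  moreover from this have "x < fst i + b * snd i"
    using gap_pos[OF assms, of x] by (force simp: Nr_cols_def)
  ultimately show "x \<in> {fst i..<fst i + b * snd i} \<inter> {x. - a < gap i x \<and> gap i x \<le> 0}"
    by (simp add: Nr_cols_def)
qed (simp add: Nr_cols_def)

lemma crossing_cols_eq:
  assumes "i \<in> D"
  shows "crossing_cols i =
    {fst i..<fst i + b * snd i} \<inter> {x. - a < gap i x \<and> gap i (x + 1) \<le> 0}"
proof (intro set_eqI iffI)
  fix x assume "x \<in> crossing_cols i"
  moreover from this have "x + 1 < fst i + b * snd i"
    using gap_pos[OF assms, of "x + 1"] by (force simp: crossing_cols_def)
  ultimately show "x \<in> {fst i..<fst i + b * snd i} \<inter> {x. - a < gap i x \<and> gap i (x + 1) \<le> 0}"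
    by (simp add: crossing_cols_def)
qed (simp add: crossing_cols_def)

lemma card_Nr_cols:
  assumes "i \<in> D"
  shows "int (card (Nr_cols i)) = of_bool (i \<notin> E) + int (card (crossing_cols i))"
proof -
  obtain u h where i: "i = (u, h)" by force
  have "1 \<le> u" "1 \<le> h" using D.bounds assms i by simp_all
  define W where "W = {u..<u + b * h}"
  define A where "A x = (of_bool (gap i x \<le> 0) :: int)" for x
  have "int (card (Nr_cols i)) - int (card (crossing_cols i)) =
      (\<Sum>x\<in>W. of_bool (- a < gap i x \<and> gap i x \<le> 0) - of_bool (- a < gap i x \<and> gap i (x + 1) \<le> 0))"
    unfolding Nr_cols_eq[OF assms] crossing_cols_eq[OF assms] by (simp add: sum_subtractf W_def i)
  also have "\<dots> = (\<Sum>x\<in>W. A x - A (x + 1))"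
  proof (rule sum.cong)
    fix x assume "x \<in> W"
    then have "gap i (x + 1) \<le> gap i x + a" using gap_step \<open>1 \<le> u\<close> by (simp add: W_def)
    then show "of_bool (- a < gap i x \<and> gap i x \<le> 0) - of_bool (- a < gap i x \<and> gap i (x + 1) \<le> 0)
        = A x - A (x + 1)"
      using D.pos_a by (auto simp: A_def)
  qed simp
  also have "\<dots> = A u - A (u + b * h)"
    unfolding W_def using \<open>1 \<le> h\<close> E.pos_b by (simp add: sum_int_atLeastLessThan_telescope)
  also have "A (u + b * h) = 0" using gap_pos[OF assms, of "u + b * h"] by (simp add: A_def i)
  also have "A u = of_bool (i \<notin> E)" using gap_start_nonpos_iff[OF assms] by (simp add: A_def i)
  finally show ?thesis by simp
qed

(* the cell \<lceil>a (x + 1 - fst i) / b\<rceil> rows below i *)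
definition crossing_cell :: "cell \<Rightarrow> int \<Rightarrow> cell" where
  "crossing_cell i x = (fst i, snd i + (a * (fst i - x - 1)) div b)"

lemma Nr_cells_if_crossing:
  assumes "(u, h) \<in> D" "x \<in> crossing_cols (u, h)"
  defines "v \<equiv> h + (a * (u - x - 1)) div b"
  shows "(u, v) \<in> Nr_cells" and "row_length E v = x"
proof -
  define K where "K = a * (x + 1 - u)"
  define t where "t = (a * (u - x - 1)) div b"
  have window: "- b < b * t + K" "b * t + K \<le> 0"
    using window_iff_eq_div[OF E.pos_b, of t K] by (simp_all add: t_def K_def algebra_simps)
  have cross: "u \<le> x" "- a < gap (u, h) x" "gap (u, h) (x + 1) \<le> 0"
    using assms(2) by (simp_all add: crossing_cols_def)
  have u: "1 \<le> u" "h \<le> col_height D u"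
    using D.bounds[OF assms(1)] D.mem_iff_col_height[of u h] assms(1) by simp_all
  have g1: "gap (u, h) (x + 1) = K + b * (col_height E (x + 1) + 1 - h)"
    by (simp add: gap_def K_def algebra_simps)
  have g0: "gap (u, h) x + a = K + b * (col_height E x + 1 - h)"
    by (simp add: gap_def K_def algebra_simps)
  have "b * (col_height E (x + 1) + 1 - h) < b * (t + 1)"
    using g1 cross(3) window(1) by (simp add: algebra_simps)
  then have "col_height E (x + 1) < v"
    using E.pos_b by (simp add: mult_less_cancel_left_pos v_def t_def)
  have "b * t < b * (col_height E x + 1 - h)" using g0 cross(2) window(2) by simp
  then have "v \<le> col_height E x"
    using E.pos_b by (simp add: mult_less_cancel_left_pos v_def t_def)
  have "0 < K" using cross(1) D.pos_a by (simp add: K_def)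
  then have "b * t < 0" using window(2) by simp
  then have "t < 0" using E.pos_b by (simp add: mult_less_0_iff)
  then have "v < h" by (simp add: v_def t_def)
  have "1 \<le> v" using \<open>col_height E (x + 1) < v\<close> E.col_height_nonneg[of "x + 1"] by simp
  have xvE: "(x, v) \<in> E" using \<open>1 \<le> v\<close> \<open>v \<le> col_height E x\<close> by (simp add: E.mem_iff_col_height)
  have "(x + 1, v) \<notin> E" using \<open>col_height E (x + 1) < v\<close> by (simp add: E.mem_iff_col_height)
  then show row: "row_length E v = x"
    using xvE by (simp add: E.mem_iff_row_length)
  have uvE: "(u, v) \<in> E" using u(1) cross(1) row xvE by (simp add: E.mem_iff_row_length)
  have uvD: "(u, v) \<in> D" using u \<open>1 \<le> v\<close> \<open>v < h\<close> by (simp add: D.mem_iff_col_height)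
  have "a * (int (arm E (u, v)) + 1) = K" using E.arm_eq[OF uvE] row by (simp add: K_def)
  also have "\<dots> \<le> b * (h - v)" using window(2) by (simp add: v_def t_def algebra_simps)
  also have "\<dots> \<le> b * int (leg D (u, v))" using D.leg_eq[OF uvD] u(2) E.pos_b by simp
  finally show "(u, v) \<in> Nr_cells" using uvD uvE by (simp add: Nr_cells_def)
qed

lemma crossing_if_Nr_cells:
  assumes "(u, v) \<in> Nr_cells"
  defines "x \<equiv> row_length E v"
  defines "h \<equiv> v - (a * (u - x - 1)) div b"
  shows "(u, h) \<in> D" and "x \<in> crossing_cols (u, h)"
proof -
  define K where "K = a * (x + 1 - u)"
  define t where "t = (a * (u - x - 1)) div b"
  have window: "- b < b * t + K" "b * t + K \<le> 0"
    using window_iff_eq_div[OF E.pos_b, of t K] by (simp_all add: t_def K_def algebra_simps)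
  have uv: "(u, v) \<in> D" "(u, v) \<in> E"
    and fit: "a * (int (arm E (u, v)) + 1) \<le> b * int (leg D (u, v))"
    using assms(1) by (auto simp: Nr_cells_def)
  have u: "1 \<le> u" "u \<le> x" "1 \<le> v"
    using E.bounds[OF uv(2)] E.mem_iff_row_length[of u v] uv(2) by (simp_all add: x_def)
  have K: "K = a * (int (arm E (u, v)) + 1)" using E.arm_eq[OF uv(2)] by (simp add: K_def x_def)
  have "0 < K" using u(2) D.pos_a by (simp add: K_def)
  then have "b * t < 0" using window(2) by simp
  then have "t < 0" using E.pos_b by (simp add: mult_less_0_iff)
  have "b * (- t) < b * (int (leg D (u, v)) + 1)" using window(1) K fit by (simp add: algebra_simps)
  then have "- t < int (leg D (u, v)) + 1" using mult_less_cancel_left_pos[OF E.pos_b] by blast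
  then show "(u, h) \<in> D"
    using D.leg_eq[OF uv(1)] \<open>t < 0\<close> u(3) by (simp add: D.mem_iff_col_height h_def t_def)
  have "(x, v) \<in> E" using u by (simp add: E.mem_iff_row_length x_def)
  then have "v \<le> col_height E x" by (simp add: E.mem_iff_col_height)
  have "(x + 1, v) \<notin> E" by (simp add: E.mem_iff_row_length x_def)
  then have "col_height E (x + 1) + 1 - h \<le> t" using u(3) by (simp add: E.mem_iff_col_height h_def t_def)
  then have "b * (col_height E (x + 1) + 1 - h) \<le> b * t" using E.pos_b by simp
  then have "gap (u, h) (x + 1) \<le> 0" using window(2) by (simp add: gap_def K_def algebra_simps)
  moreover have "b * (t + 1) \<le> b * (col_height E x + 1 - h)"
    using \<open>v \<le> col_height E x\<close> E.pos_b by (simp add: h_def t_def)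
  then have "- a < gap (u, h) x" using window(1) by (simp add: gap_def K_def algebra_simps)
  ultimately show "x \<in> crossing_cols (u, h)" using u(2) by (simp add: crossing_cols_def)
qed

lemma card_Sigma_crossing_cols: "card (Sigma D crossing_cols) = card Nr_cells"
proof (rule bij_betw_same_card[of "\<lambda>(i, x). crossing_cell i x"], rule bij_betwI')
  fix X Y assume XY: "X \<in> Sigma D crossing_cols" "Y \<in> Sigma D crossing_cols"
  obtain u h x u' h' x' where X: "X = ((u, h), x)" and Y: "Y = ((u', h'), x')"
    by (metis prod.collapse)
  show "(case X of (i, x) \<Rightarrow> crossing_cell i x) = (case Y of (i, x) \<Rightarrow> crossing_cell i x)
      \<longleftrightarrow> X = Y"
  proof
    assume eq: "(case X of (i, x) \<Rightarrow> crossing_cell i x) = (case Y of (i, x) \<Rightarrow> crossing_cell i x)"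
    then have u: "u' = u" by (simp add: X Y crossing_cell_def)
    from eq have v: "snd (crossing_cell (u, h') x') = snd (crossing_cell (u, h) x)"
      by (simp add: X Y u)
    have "x = row_length E (snd (crossing_cell (u, h) x))"
      using Nr_cells_if_crossing(2)[of u h x] XY by (simp add: X crossing_cell_def)
    also have "\<dots> = x'"
      using Nr_cells_if_crossing(2)[of u h' x'] XY v by (simp add: Y u crossing_cell_def)
    finally show "X = Y" using u v by (simp add: X Y crossing_cell_def)
  qed simp
next
  fix X assume "X \<in> Sigma D crossing_cols"
  moreover obtain u h x where "X = ((u, h), x)" by (metis prod.collapse)
  ultimately show "(case X of (i, x) \<Rightarrow> crossing_cell i x) \<in> Nr_cells"
    using Nr_cells_if_crossing(1) by (simp add: crossing_cell_def)
next
  fix c assume "c \<in> Nr_cells"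
  moreover obtain u v where c: "c = (u, v)" by force
  moreover define x where "x = row_length E v"
  moreover define h where "h = v - (a * (u - x - 1)) div b"
  ultimately have "((u, h), x) \<in> Sigma D crossing_cols" using crossing_if_Nr_cells by simp
  moreover have "c = crossing_cell (u, h) x" by (simp add: c h_def crossing_cell_def)
  ultimately show "\<exists>X \<in> Sigma D crossing_cols. c = (case X of (i, x) \<Rightarrow> crossing_cell i x)"
    by force
qed

lemma card_Nr: "card (Nr a b D E) = card (D - E) + card {c \<in> D \<inter> E. small_m E D c \<ge> real_of_int a / real_of_int b}"
proof -
  have fin: "finite (Nr_cols i)" "finite (crossing_cols i)" if "i \<in> D" for i
    by (simp_all add: Nr_cols_eq[OF that] crossing_cols_eq[OF that])
  have "int (card (Nr a b D E)) = (\<Sum>i\<in>D. int (card (Nr_cols i)))"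
    using card_Nr_eq_card_Sigma D.finite_S fin by (simp add: card_SigmaI)
  also have "\<dots> = (\<Sum>i\<in>D. of_bool (i \<notin> E)) + (\<Sum>i\<in>D. int (card (crossing_cols i)))"
    by (simp add: card_Nr_cols sum.distrib)
  also have "(\<Sum>i\<in>D. of_bool (i \<notin> E)) = int (card (D - E))"
    using D.finite_S by (simp add: set_diff_eq Int_def)
  also have "(\<Sum>i\<in>D. int (card (crossing_cols i))) = int (card Nr_cells)"
    using D.finite_S fin card_Sigma_crossing_cols by (simp add: card_SigmaI flip: of_nat_sum)
  also have "Nr_cells = {c \<in> D \<inter> E. small_m E D c \<ge> real_of_int a / real_of_int b}"
    using small_m_ge_iff[OF E.pos_b] by (auto simp: Nr_cells_def)
  finally show ?thesis by linarith
qed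

end

theorem mainTheorem7:
  fixes a b :: int and D E :: "cell set"
  assumes "1 < a" and "a < b" and "coprime a b"
    and "subdiagram a b D" and "subdiagram a b E"
  shows "card (Nb a b D E) = card {c \<in> D \<inter> E. big_M D E c \<le> ereal (real_of_int a / real_of_int b)}
       \<and> card (Nr a b D E) = card (D - E)
            + card {c \<in> D \<inter> E. small_m E D c \<ge> real_of_int a / real_of_int b}"
proof -
  interpret two_diagrams a b D E
    using assms by unfold_locales auto
  show ?thesis using card_Nb card_Nr by simp
qed

end
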